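(* Let $n=4$ and define $\xi_{ijkl}=(\Omega,\partial_i\partial_j\partial_k\partial_l\Omega)$. Then $\xi_{ijkl}=-(D_jD_kD_l\Omega,D_i\Omega)=(D_kD_l\Omega,D_jD_i\Omega)$.
   Context: $\mathcal M$ is the moduli space of polarized Calabi–Yau fourfolds, of complex dimension $m$, with local holomorphic coordinates $z_1,\dots,z_m$, $\partial_i=\partial/\partial z_i$. Locally the primitive middle cohomology of the fibres is identified with one fixed space $H$ with varying Hodge decomposition $H=\bigoplus_{p+q=4}H^{p,q}$. $Q(\phi,\psi)=(-1)^{n(n-1)/2}\int\phi\wedge\psi$, $(\xi,\eta)=(\sqrt{-1})^4Q(\xi,\eta)$ (bilinear). $\Omega$ is a nonzero local holomorphic section of $F^4$. Weil–Petersson metric $g_{i\bar j}=-\partial_i\bar\partial_j\log(\Omega,\bar\Omega)$, Christoffel symbols $\Gamma^k_{ij}=g^{k\bar q}\partial_jg_{i\bar q}$, $K_i=-\partial_i\log(\Omega,\bar\Omega)$, $D_i\Omega=\partial_i\Omega+K_i\Omega$, $D_jD_i\Omega=\partial_jD_i\Omega-\sum_k\Gamma^k_{ij}D_k\Omega+K_jD_i\Omega$, $T_{k\alpha i}=\partial_kD_\alpha D_i\Omega+K_kD_\alpha D_i\Omega-\sum_p\Gamma^p_{\alpha k}D_pD_i\Omega-\sum_p\Gamma^p_{ik}D_\alpha D_p\Omega$, and $D_kD_\alpha D_i\Omega$ is the $H^{1,3}$-component of $T_{k\alpha i}$. *)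

theory Defs
  imports "HOL-Analysis.Analysis"
begin

text \<open>
Abstract local model of the variation of Hodge structure on the primitive middle
cohomology of a family of polarized Calabi--Yau fourfolds over a coordinate chart.
The fixed space H = complex^'n, with the real structure given by componentwise
complex conjugation (the coordinates are taken w.r.t. a basis of H_R).
The Hodge decomposition at z is hp p z = H^{p,4-p}(z), p = 0..4.
\<close>

definition wirt :: "'m::finite \<Rightarrow> (complex^'m \<Rightarrow> complex) \<Rightarrow> complex^'m \<Rightarrow> complex" where
  "wirt i f z =
     (vector_derivative (\<lambda>t::real. f (z + t *\<^sub>R axis i 1)) (at 0)
      - \<i> * vector_derivative (\<lambda>t::real. f (z + t *\<^sub>R axis i \<i>)) (at 0)) / 2"

definition awirt :: "'m::finite \<Rightarrow> (complex^'m \<Rightarrow> complex) \<Rightarrow> complex^'m \<Rightarrow> complex" where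
  "awirt i f z =
     (vector_derivative (\<lambda>t::real. f (z + t *\<^sub>R axis i 1)) (at 0)
      + \<i> * vector_derivative (\<lambda>t::real. f (z + t *\<^sub>R axis i \<i>)) (at 0)) / 2"

definition vwirt :: "'m::finite \<Rightarrow> (complex^'m \<Rightarrow> complex^'n) \<Rightarrow> complex^'m \<Rightarrow> complex^'n" where
  "vwirt i F z = (\<chi> a. wirt i (\<lambda>w. F w $ a) z)"

definition cholo_at :: "(complex^'m::finite \<Rightarrow> complex) \<Rightarrow> complex^'m \<Rightarrow> bool" where
  "cholo_at f z \<longleftrightarrow> (\<exists>L. (f has_derivative L) (at z) \<and> (\<forall>c v. L (c *s v) = c * L v))"

text \<open>Holomorphic on U (together with all its holomorphic partial derivatives,
 which is automatic for holomorphic functions).\<close>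
definition hol_on :: "(complex^'m::finite) set \<Rightarrow> (complex^'m \<Rightarrow> complex) \<Rightarrow> bool" where
  "hol_on U f \<longleftrightarrow> (\<forall>is::'m list. \<forall>z\<in>U. cholo_at (foldr wirt is f) z)"

definition vcnj :: "complex^'n \<Rightarrow> complex^'n" where
  "vcnj v = (\<chi> a. cnj (v $ a))"

text \<open>The bilinear form (xi,eta) = (sqrt -1)^4 Q(xi,eta) = Q(xi,eta), Q given by a real matrix.\<close>
definition pr :: "real^'n^'n \<Rightarrow> complex^'n::finite \<Rightarrow> complex^'n \<Rightarrow> complex" where
  "pr B x y = (\<Sum>a\<in>UNIV. \<Sum>b\<in>UNIV. x $ a * complex_of_real (B $ a $ b) * y $ b)"

definition csubspace :: "(complex^'n) set \<Rightarrow> bool" where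
  "csubspace S \<longleftrightarrow> 0 \<in> S \<and> (\<forall>x\<in>S. \<forall>y\<in>S. x + y \<in> S) \<and> (\<forall>c. \<forall>x\<in>S. c *s x \<in> S)"

definition filt :: "(nat \<Rightarrow> 'z \<Rightarrow> (complex^'n) set) \<Rightarrow> nat \<Rightarrow> 'z \<Rightarrow> (complex^'n) set" where
  "filt hp p z = {(\<Sum>q\<in>{p..4}. y q) | y. \<forall>q\<in>{p..4}. y q \<in> hp q z}"

definition hcomp :: "(nat \<Rightarrow> 'z \<Rightarrow> (complex^'n) set) \<Rightarrow> nat \<Rightarrow> 'z \<Rightarrow> complex^'n \<Rightarrow> complex^'n" where
  "hcomp hp p z v = (THE x. \<exists>y. (\<forall>q\<le>4. y q \<in> hp q z) \<and> v = (\<Sum>q\<le>4. y q) \<and> y p = x)"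

definition hodge_structure ::
  "real^'n^'n \<Rightarrow> (nat \<Rightarrow> complex^'m \<Rightarrow> (complex^'n::finite) set) \<Rightarrow> (complex^'m) set \<Rightarrow> bool" where
  "hodge_structure B hp U \<longleftrightarrow>
     (\<forall>a b. B $ a $ b = B $ b $ a) \<and> det B \<noteq> 0 \<and>
     (\<forall>z\<in>U.
        (\<forall>p\<le>4. csubspace (hp p z)) \<and>
        (\<forall>v. \<exists>!y. (\<forall>q. (q \<le> 4 \<longrightarrow> y q \<in> hp q z) \<and> (4 < q \<longrightarrow> y q = 0)) \<and> v = (\<Sum>q\<le>4. y q)) \<and>
        (\<forall>p\<le>4. vcnj ` hp p z = hp (4 - p) z) \<and>
        (\<forall>p\<le>4. \<forall>p'\<le>4. p + p' \<noteq> 4 \<longrightarrow> (\<forall>x\<in>hp p z. \<forall>y\<in>hp p' z. pr B x y = 0)) \<and>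
        (\<forall>p\<le>4. \<forall>x\<in>hp p z. x \<noteq> 0 \<longrightarrow>
            (let c = \<i> ^ p * (- \<i>) ^ (4 - p) * pr B x (vcnj x) in Im c = 0 \<and> Re c > 0)))"

definition transversal ::
  "(nat \<Rightarrow> complex^'m::finite \<Rightarrow> (complex^'n::finite) set) \<Rightarrow> (complex^'m) set \<Rightarrow> bool" where
  "transversal hp U \<longleftrightarrow>
     (\<forall>p\<in>{1..4}. \<forall>(s :: complex^'m \<Rightarrow> complex^'n) z i. z \<in> U \<longrightarrow>
        (\<forall>w\<in>U. s w \<in> filt hp p w) \<longrightarrow> s differentiable (at z) \<longrightarrow>
        vwirt i s z \<in> filt hp (p - 1) z)"

definition lw :: "real^'n^'n \<Rightarrow> (complex^'m \<Rightarrow> complex^'n::finite) \<Rightarrow> complex^'m \<Rightarrow> complex" where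
  "lw B \<Omega> z = Ln (pr B (\<Omega> z) (vcnj (\<Omega> z)))"

definition Kf :: "real^'n^'n \<Rightarrow> (complex^'m::finite \<Rightarrow> complex^'n::finite) \<Rightarrow> 'm \<Rightarrow> complex^'m \<Rightarrow> complex" where
  "Kf B \<Omega> i z = - wirt i (lw B \<Omega>) z"

definition gm :: "real^'n^'n \<Rightarrow> (complex^'m::finite \<Rightarrow> complex^'n::finite) \<Rightarrow> 'm \<Rightarrow> 'm \<Rightarrow> complex^'m \<Rightarrow> complex" where
  "gm B \<Omega> i j z = - wirt i (awirt j (lw B \<Omega>)) z"

definition gmat :: "real^'n^'n \<Rightarrow> (complex^'m::finite \<Rightarrow> complex^'n::finite) \<Rightarrow> complex^'m \<Rightarrow> complex^'m^'m" where
  "gmat B \<Omega> z = (\<chi> i j. gm B \<Omega> i j z)"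

text \<open>g^{k qbar}: sum_q g^{k qbar} g_{p qbar} = delta_{kp}.\<close>
definition ginv :: "real^'n^'n \<Rightarrow> (complex^'m::finite \<Rightarrow> complex^'n::finite) \<Rightarrow> complex^'m \<Rightarrow> complex^'m^'m" where
  "ginv B \<Omega> z = matrix_inv (transpose (gmat B \<Omega> z))"

definition Gam :: "real^'n^'n \<Rightarrow> (complex^'m::finite \<Rightarrow> complex^'n::finite) \<Rightarrow> 'm \<Rightarrow> 'm \<Rightarrow> 'm \<Rightarrow> complex^'m \<Rightarrow> complex" where
  "Gam B \<Omega> k i j z = (\<Sum>q\<in>UNIV. ginv B \<Omega> z $ k $ q * wirt j (gm B \<Omega> i q) z)"

definition D1 :: "real^'n^'n \<Rightarrow> (complex^'m::finite \<Rightarrow> complex^'n::finite) \<Rightarrow> 'm \<Rightarrow> complex^'m \<Rightarrow> complex^'n" where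
  "D1 B \<Omega> i z = vwirt i \<Omega> z + Kf B \<Omega> i z *s \<Omega> z"

text \<open>D2 B Omega j i = D_j D_i Omega\<close>
definition D2 :: "real^'n^'n \<Rightarrow> (complex^'m::finite \<Rightarrow> complex^'n::finite) \<Rightarrow> 'm \<Rightarrow> 'm \<Rightarrow> complex^'m \<Rightarrow> complex^'n" where
  "D2 B \<Omega> j i z = vwirt j (D1 B \<Omega> i) z - (\<Sum>k\<in>UNIV. Gam B \<Omega> k i j z *s D1 B \<Omega> k z)
                    + Kf B \<Omega> j z *s D1 B \<Omega> i z"

definition T3 :: "real^'n^'n \<Rightarrow> (complex^'m::finite \<Rightarrow> complex^'n::finite) \<Rightarrow> 'm \<Rightarrow> 'm \<Rightarrow> 'm \<Rightarrow> complex^'m \<Rightarrow> complex^'n" where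
  "T3 B \<Omega> k \<alpha> i z = vwirt k (D2 B \<Omega> \<alpha> i) z + Kf B \<Omega> k z *s D2 B \<Omega> \<alpha> i z
        - (\<Sum>p\<in>UNIV. Gam B \<Omega> p \<alpha> k z *s D2 B \<Omega> p i z)
        - (\<Sum>p\<in>UNIV. Gam B \<Omega> p i k z *s D2 B \<Omega> \<alpha> p z)"

text \<open>D_k D_alpha D_i Omega = H^{1,3}-component of T_{k alpha i}\<close>
definition D3 :: "real^'n^'n \<Rightarrow> (nat \<Rightarrow> complex^'m \<Rightarrow> (complex^'n) set) \<Rightarrow> (complex^'m::finite \<Rightarrow> complex^'n::finite)
                  \<Rightarrow> 'm \<Rightarrow> 'm \<Rightarrow> 'm \<Rightarrow> complex^'m \<Rightarrow> complex^'n" where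
  "D3 B hp \<Omega> k \<alpha> i z = hcomp hp 1 z (T3 B \<Omega> k \<alpha> i z)"

definition xi :: "real^'n^'n \<Rightarrow> (complex^'m::finite \<Rightarrow> complex^'n::finite) \<Rightarrow> 'm \<Rightarrow> 'm \<Rightarrow> 'm \<Rightarrow> 'm \<Rightarrow> complex^'m \<Rightarrow> complex" where
  "xi B \<Omega> i j k l z = pr B (\<Omega> z) (vwirt i (vwirt j (vwirt k (vwirt l \<Omega>))) z)"

end

theory Submission
  imports Defs
begin

text \<open>By Griffiths transversality every holomorphic derivative lowers the Hodge filtration level by at
  most one, so \<open>\<partial>\<^sup>r\<Omega> \<in> F\<^sup>4\<^sup>-\<^sup>r\<close>; likewise \<open>D\<^sub>i\<Omega> - \<partial>\<^sub>i\<Omega> \<in> F\<^sup>4\<close>, \<open>D\<^sub>kD\<^sub>l\<Omega> - \<partial>\<^sub>k\<partial>\<^sub>l\<Omega> \<in> F\<^sup>3\<close> and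
  \<open>T\<^sub>j\<^sub>k\<^sub>l - \<partial>\<^sub>j\<partial>\<^sub>k\<partial>\<^sub>l\<Omega> \<in> F\<^sup>2\<close>. As \<open>F\<^sup>p \<bottom> F\<^sup>q\<close> for \<open>p + q \<ge> 5\<close>, differentiating the identities
  \<open>(\<Omega>, \<partial>\<^sub>j\<partial>\<^sub>k\<partial>\<^sub>l\<Omega>) = 0\<close> and \<open>(\<partial>\<^sub>i\<Omega>, \<partial>\<^sub>k\<partial>\<^sub>l\<Omega>) = 0\<close> gives
  \<open>\<xi>\<^sub>i\<^sub>j\<^sub>k\<^sub>l = -(\<partial>\<^sub>i\<Omega>, \<partial>\<^sub>j\<partial>\<^sub>k\<partial>\<^sub>l\<Omega>) = (\<partial>\<^sub>j\<partial>\<^sub>i\<Omega>, \<partial>\<^sub>k\<partial>\<^sub>l\<Omega>)\<close>, and every correction term drops out of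
  the pairings. Transversality can only be applied to \<open>D\<^sub>kD\<^sub>l\<Omega>\<close> once it is known to be
  differentiable, which involves derivatives of the Christoffel symbols; this is settled by proving,
  by coinduction up to the algebraic operations involved, that everything built from \<open>\<Omega>\<close> is
  smooth.\<close>

section \<open>Wirtinger derivatives\<close>

lemma wirt_eq_derivative:
  assumes "(f has_derivative f') (at z)"
  shows "wirt i f z = (f' (axis i 1) - \<i> * f' (axis i \<i>)) / 2"
    and "awirt i f z = (f' (axis i 1) + \<i> * f' (axis i \<i>)) / 2"
proof -
  have directional: "vector_derivative (\<lambda>t::real. f (z + t *\<^sub>R v)) (at 0) = f' v" for v
  proof -
    have "((\<lambda>t::real. z + t *\<^sub>R v) has_derivative (\<lambda>t. t *\<^sub>R v)) (at 0)"
      by (auto intro!: derivative_eq_intros)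
    moreover have "(f has_derivative f') (at (z + (0::real) *\<^sub>R v))"
      using assms by simp
    ultimately have "((\<lambda>t::real. f (z + t *\<^sub>R v)) has_derivative (\<lambda>t. f' (t *\<^sub>R v))) (at 0)"
      using has_derivative_compose[of "\<lambda>t::real. z + t *\<^sub>R v" _ 0 UNIV f f'] by (simp add: o_def)
    then have "((\<lambda>t::real. f (z + t *\<^sub>R v)) has_vector_derivative f' v) (at 0)"
      unfolding has_vector_derivative_def
      using has_derivative_bounded_linear[OF assms] by (simp add: linear_simps)
    then show ?thesis
      by (rule vector_derivative_at)
  qed
  show "wirt i f z = (f' (axis i 1) - \<i> * f' (axis i \<i>)) / 2"
    unfolding wirt_def directional ..
  show "awirt i f z = (f' (axis i 1) + \<i> * f' (axis i \<i>)) / 2"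
    unfolding awirt_def directional ..
qed

lemma wirt_const [simp]: "wirt i (\<lambda>w. c) z = 0"
  using wirt_eq_derivative(1)[of "\<lambda>w. c" "\<lambda>v. 0" z i] by simp

lemma wirt_add:
  assumes "f differentiable (at z)" "g differentiable (at z)"
  shows "wirt i (\<lambda>w. f w + g w) z = wirt i f z + wirt i g z"
proof -
  obtain f' g' where f: "(f has_derivative f') (at z)" and g: "(g has_derivative g') (at z)"
    using assms unfolding differentiable_def by blast
  show ?thesis
    unfolding wirt_eq_derivative(1)[OF has_derivative_add[OF f g]]
      wirt_eq_derivative(1)[OF f] wirt_eq_derivative(1)[OF g]
    by (simp add: field_simps)
qed

lemma wirt_mult:
  assumes "f differentiable (at z)" "g differentiable (at z)"
  shows "wirt i (\<lambda>w. f w * g w) z = wirt i f z * g z + f z * wirt i g z"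
proof -
  obtain f' g' where f: "(f has_derivative f') (at z)" and g: "(g has_derivative g') (at z)"
    using assms unfolding differentiable_def by blast
  show ?thesis
    unfolding wirt_eq_derivative(1)[OF has_derivative_mult[OF f g]]
      wirt_eq_derivative(1)[OF f] wirt_eq_derivative(1)[OF g]
    by (simp add: field_simps)
qed

lemma wirt_sum:
  assumes "finite S" "\<And>a. a \<in> S \<Longrightarrow> f a differentiable (at z)"
  shows "wirt i (\<lambda>w. \<Sum>a\<in>S. f a w) z = (\<Sum>a\<in>S. wirt i (f a) z)"
  using assms
proof (induction S rule: finite_induct)
  case (insert x F)
  have "(\<lambda>w. \<Sum>a\<in>F. f a w) differentiable (at z)"
    using insert by (intro differentiable_sum) auto
  then show ?case
    using insert wirt_add[of "f x" z "\<lambda>w. \<Sum>a\<in>F. f a w" i] by simp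
qed simp

lemma wirt_eq_0_if_vanishing_on_open:
  assumes "open U" "z \<in> U" "\<forall>w\<in>U. f w = 0"
  shows "wirt i f z = 0"
proof -
  have "(f has_derivative (\<lambda>v. 0)) (at z)"
    using has_derivative_transform_within_open[of "\<lambda>w. 0" "\<lambda>v. 0" z UNIV U f] assms by auto
  then show ?thesis
    using wirt_eq_derivative(1) by fastforce
qed

lemma wirt_complex_linear_derivative:
  fixes f :: "complex^'m::finite \<Rightarrow> complex"
  assumes "(f has_derivative L) (at z)" "\<forall>c v. L (c *s v) = c * L v"
  shows "L v = (\<Sum>i\<in>UNIV. v $ i * wirt i f z)"
proof -
  have "axis i \<i> = \<i> *s (axis i 1 :: complex^'m)" for i
    by (simp add: axis_def vec_eq_iff)
  then have wirt_L: "wirt i f z = L (axis i 1)" for i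
    using wirt_eq_derivative(1)[OF assms(1), of i] assms(2) by (simp add: field_simps)
  have "L v = L (\<Sum>i\<in>UNIV. v $ i *s axis i 1)"
    by (simp add: basis_expansion)
  also have "\<dots> = (\<Sum>i\<in>UNIV. L (v $ i *s axis i 1))"
    using has_derivative_bounded_linear[OF assms(1)] by (simp add: linear_sum bounded_linear.linear)
  also have "\<dots> = (\<Sum>i\<in>UNIV. v $ i * wirt i f z)"
    using assms(2) wirt_L by simp
  finally show ?thesis .
qed

lemma vwirt_component: "vwirt i F z $ a = wirt i (\<lambda>w. F w $ a) z"
  by (simp add: vwirt_def)

lemma differentiable_bounded_linear_compose:
  "bounded_linear L \<Longrightarrow> F differentiable (at z) \<Longrightarrow> (\<lambda>w. L (F w)) differentiable (at z)"
  using differentiable_chain_at[of F z L, OF _ bounded_linear_imp_differentiable] by (simp add: o_def)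

lemma differentiable_component:
  "F differentiable (at z) \<Longrightarrow> (\<lambda>w. F w $ a) differentiable (at z)"
  by (rule differentiable_bounded_linear_compose[OF bounded_linear_vec_nth])

lemma differentiable_vecI:
  fixes F :: "'a::real_normed_vector \<Rightarrow> complex^'n"
  assumes "\<And>a. (\<lambda>w. F w $ a) differentiable (at z)"
  shows "F differentiable (at z)"
proof -
  have "linear (axis a :: complex \<Rightarrow> complex^'n)" for a
    by (rule linearI) (simp_all add: axis_def vec_eq_iff)
  then have "bounded_linear (axis a :: complex \<Rightarrow> complex^'n)" for a
    by (simp add: linear_conv_bounded_linear)
  then have "(\<lambda>w. \<Sum>a\<in>UNIV. axis a (F w $ a)) differentiable (at z)"
    using differentiable_bounded_linear_compose[OF _ assms] by (intro differentiable_sum) auto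
  moreover have "(\<Sum>a\<in>UNIV. axis a (x $ a)) = x" for x :: "complex^'n"
    by (simp add: vec_eq_iff axis_def)
  ultimately show ?thesis by simp
qed

lemma vwirt_add:
  assumes "F differentiable (at z)" "G differentiable (at z)"
  shows "vwirt i (\<lambda>w. F w + G w) z = vwirt i F z + vwirt i G z"
  using wirt_add[OF differentiable_component[OF assms(1)] differentiable_component[OF assms(2)]]
  by (simp add: vec_eq_iff vwirt_component)

lemma hol_on_wirt: "hol_on U f \<Longrightarrow> hol_on U (wirt i f)"
proof (unfold hol_on_def, intro allI ballI)
  fix "is" z
  assume "\<forall>is. \<forall>z\<in>U. cholo_at (foldr wirt is f) z" "z \<in> U"
  then have "cholo_at (foldr wirt (is @ [i]) f) z" by blast
  then show "cholo_at (foldr wirt is (wirt i f)) z" by simp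
qed

section \<open>Smooth functions\<close>

definition derivatives_in :: "'a::real_normed_vector set \<Rightarrow> ('a \<Rightarrow> complex) set \<Rightarrow> ('a \<Rightarrow> complex) \<Rightarrow> bool"
  where "derivatives_in U S f \<longleftrightarrow>
    (\<forall>w\<in>U. f differentiable (at w)) \<and> (\<forall>v. (\<lambda>w. frechet_derivative f (at w) v) \<in> S)"

lemma derivatives_in_mono: "derivatives_in U S f \<Longrightarrow> S \<subseteq> T \<Longrightarrow> derivatives_in U T f"
  unfolding derivatives_in_def by blast

lemma derivatives_in_has_derivative:
  "derivatives_in U S f \<Longrightarrow> w \<in> U \<Longrightarrow> (f has_derivative frechet_derivative f (at w)) (at w)"
  unfolding derivatives_in_def by (simp add: frechet_derivative_works[symmetric])

lemma derivatives_in_derivative: "derivatives_in U S f \<Longrightarrow> (\<lambda>w. frechet_derivative f (at w) v) \<in> S"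
  unfolding derivatives_in_def by blast

coinductive_set smooth_on :: "'a::real_normed_vector set \<Rightarrow> ('a \<Rightarrow> complex) set" for U
  where smooth_onI:
    "(\<forall>w\<in>U. f differentiable (at w)) \<Longrightarrow> (\<forall>v. (\<lambda>w. frechet_derivative f (at w) v) \<in> smooth_on U) \<Longrightarrow>
      f \<in> smooth_on U"

lemma smooth_on_iff: "f \<in> smooth_on U \<longleftrightarrow> derivatives_in U (smooth_on U) f"
  unfolding derivatives_in_def by (blast elim: smooth_on.cases intro: smooth_onI)

inductive_set smooth_closure ::
  "'a::real_normed_vector set \<Rightarrow> ('a \<Rightarrow> complex) set \<Rightarrow> ('a \<Rightarrow> complex) set" for U S
where
  smooth_closure_base: "f \<in> S \<Longrightarrow> f \<in> smooth_closure U S"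
| smooth_closure_const: "(\<lambda>w. c) \<in> smooth_closure U S"
| smooth_closure_add:
    "f \<in> smooth_closure U S \<Longrightarrow> g \<in> smooth_closure U S \<Longrightarrow> (\<lambda>w. f w + g w) \<in> smooth_closure U S"
| smooth_closure_mult:
    "f \<in> smooth_closure U S \<Longrightarrow> g \<in> smooth_closure U S \<Longrightarrow> (\<lambda>w. f w * g w) \<in> smooth_closure U S"
| smooth_closure_cnj: "f \<in> smooth_closure U S \<Longrightarrow> (\<lambda>w. cnj (f w)) \<in> smooth_closure U S"
| smooth_closure_inverse:
    "f \<in> smooth_closure U S \<Longrightarrow> \<forall>w\<in>U. f w \<noteq> 0 \<Longrightarrow> (\<lambda>w. inverse (f w)) \<in> smooth_closure U S"
| smooth_closure_Ln:
    "f \<in> smooth_closure U S \<Longrightarrow> \<forall>w\<in>U. f w \<notin> \<real>\<^sub>\<le>\<^sub>0 \<Longrightarrow> (\<lambda>w. Ln (f w)) \<in> smooth_closure U S"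
| smooth_closure_cong: "f \<in> smooth_closure U S \<Longrightarrow> \<forall>w\<in>U. g w = f w \<Longrightarrow> g \<in> smooth_closure U S"

lemma smooth_closure_uminus: "f \<in> smooth_closure U S \<Longrightarrow> (\<lambda>w. - f w) \<in> smooth_closure U S"
  using smooth_closure_mult[OF smooth_closure_const[of "-1"]] by simp

lemma smooth_closure_diff:
  "f \<in> smooth_closure U S \<Longrightarrow> g \<in> smooth_closure U S \<Longrightarrow> (\<lambda>w. f w - g w) \<in> smooth_closure U S"
  using smooth_closure_add[OF _ smooth_closure_uminus] by simp

lemma smooth_closure_sum:
  "finite A \<Longrightarrow> (\<And>a. a \<in> A \<Longrightarrow> h a \<in> smooth_closure U S) \<Longrightarrow>
    (\<lambda>w. \<Sum>a\<in>A. h a w) \<in> smooth_closure U S"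
  by (induction A rule: finite_induct) (auto intro: smooth_closure_const smooth_closure_add)

lemma smooth_closure_prod:
  "finite A \<Longrightarrow> (\<And>a. a \<in> A \<Longrightarrow> h a \<in> smooth_closure U S) \<Longrightarrow>
    (\<lambda>w. \<Prod>a\<in>A. h a w) \<in> smooth_closure U S"
  by (induction A rule: finite_induct) (auto intro: smooth_closure_const smooth_closure_mult)

lemma derivatives_in_closureI:
  assumes "\<And>w. w \<in> U \<Longrightarrow> (f has_derivative f' w) (at w)"
    and "\<And>v. (\<lambda>w. f' w v) \<in> smooth_closure U S"
  shows "derivatives_in U (smooth_closure U S) f"
  unfolding derivatives_in_def
proof (intro conjI allI ballI)
  show "f differentiable (at w)" if "w \<in> U" for w
    using assms(1)[OF that] by (rule differentiableI)
  fix v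
  have "\<forall>w\<in>U. frechet_derivative f (at w) v = f' w v"
    using assms(1) frechet_derivative_at by metis
  then show "(\<lambda>w. frechet_derivative f (at w) v) \<in> smooth_closure U S"
    by (rule smooth_closure_cong[OF assms(2)])
qed

lemma smooth_closure_derivatives_in:
  assumes "open U" and S: "\<And>g. g \<in> S \<Longrightarrow> derivatives_in U (smooth_closure U S) g"
    and "f \<in> smooth_closure U S"
  shows "derivatives_in U (smooth_closure U S) f"
  using assms(3)
proof induction
  case (smooth_closure_const c)
  show ?case
    by (rule derivatives_in_closureI[where f'="\<lambda>w v. 0"]) (auto intro: smooth_closure.intros)
next
  case (smooth_closure_add f g)
  show ?case
    by (rule derivatives_in_closureI[where
          f'="\<lambda>w v. frechet_derivative f (at w) v + frechet_derivative g (at w) v"])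
      (use smooth_closure_add.IH in \<open>auto intro: has_derivative_add derivatives_in_has_derivative
         smooth_closure.smooth_closure_add derivatives_in_derivative\<close>)
next
  case (smooth_closure_mult f g)
  show ?case
  proof (rule derivatives_in_closureI[where
        f'="\<lambda>w v. f w * frechet_derivative g (at w) v + frechet_derivative f (at w) v * g w"])
    show "((\<lambda>w. f w * g w) has_derivative
        (\<lambda>v. f w * frechet_derivative g (at w) v + frechet_derivative f (at w) v * g w)) (at w)"
      if "w \<in> U" for w
      using smooth_closure_mult.IH that by (intro has_derivative_mult derivatives_in_has_derivative)
    show "(\<lambda>w. f w * frechet_derivative g (at w) v + frechet_derivative f (at w) v * g w)
        \<in> smooth_closure U S" for v
      using smooth_closure_mult by (intro smooth_closure.smooth_closure_add
          smooth_closure.smooth_closure_mult derivatives_in_derivative)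
  qed
next
  case (smooth_closure_cnj f)
  show ?case
    by (rule derivatives_in_closureI[where f'="\<lambda>w v. cnj (frechet_derivative f (at w) v)"])
      (use smooth_closure_cnj.IH in \<open>auto intro: bounded_linear.has_derivative[OF bounded_linear_cnj]
         derivatives_in_has_derivative smooth_closure.smooth_closure_cnj derivatives_in_derivative\<close>)
next
  case (smooth_closure_inverse f)
  show ?case
  proof (rule derivatives_in_closureI[where
        f'="\<lambda>w v. - (inverse (f w) * frechet_derivative f (at w) v * inverse (f w))"])
    show "((\<lambda>w. inverse (f w)) has_derivative
        (\<lambda>v. - (inverse (f w) * frechet_derivative f (at w) v * inverse (f w)))) (at w)"
      if "w \<in> U" for w
      using smooth_closure_inverse that by (intro Deriv.has_derivative_inverse derivatives_in_has_derivative) auto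
    show "(\<lambda>w. - (inverse (f w) * frechet_derivative f (at w) v * inverse (f w))) \<in> smooth_closure U S"
      for v
      using smooth_closure_inverse by (intro smooth_closure_uminus smooth_closure.smooth_closure_mult
          smooth_closure.smooth_closure_inverse derivatives_in_derivative)
  qed
next
  case (smooth_closure_Ln f)
  have nonzero: "\<forall>w\<in>U. f w \<noteq> 0"
    using smooth_closure_Ln.hyps by (metis nonpos_Reals_zero_I)
  have "((\<lambda>w. Ln (f w)) has_derivative (\<lambda>v. inverse (f w) * frechet_derivative f (at w) v)) (at w)"
    if "w \<in> U" for w
    using has_derivative_compose[OF derivatives_in_has_derivative[OF smooth_closure_Ln.IH that]
        has_field_derivative_Ln[of "f w", unfolded has_field_derivative_def]]
      smooth_closure_Ln.hyps that by simp
  then show ?case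
    by (rule derivatives_in_closureI)
      (use smooth_closure_Ln nonzero in \<open>auto intro: smooth_closure.smooth_closure_mult
         smooth_closure.smooth_closure_inverse derivatives_in_derivative\<close>)
next
  case (smooth_closure_cong f g)
  have "(g has_derivative frechet_derivative f (at w)) (at w)" if "w \<in> U" for w
    using has_derivative_transform_within_open[OF
        derivatives_in_has_derivative[OF smooth_closure_cong.IH that] assms(1) that]
      smooth_closure_cong.hyps by auto
  then show ?case
    using derivatives_in_derivative[OF smooth_closure_cong.IH] by (rule derivatives_in_closureI)
qed (rule S)

theorem smooth_on_coinduct_upto:
  assumes "open U"
    and "\<And>f. f \<in> X \<Longrightarrow> derivatives_in U (smooth_closure U (X \<union> smooth_on U)) f"
  shows "smooth_closure U (X \<union> smooth_on U) \<subseteq> smooth_on U"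
proof
  have base: "derivatives_in U (smooth_closure U (X \<union> smooth_on U)) g" if "g \<in> X \<union> smooth_on U" for g
    using that assms(2) smooth_on_iff derivatives_in_mono by (blast intro: smooth_closure_base)
  fix f assume "f \<in> smooth_closure U (X \<union> smooth_on U)"
  then show "f \<in> smooth_on U"
  proof (coinduction arbitrary: f)
    case (smooth_on f)
    then show ?case
      using smooth_closure_derivatives_in[OF assms(1) base smooth_on]
      unfolding derivatives_in_def by blast
  qed
qed

context
  fixes U :: "'a::real_normed_vector set"
  assumes open_U: "open U"
begin

lemma smooth_on_closed: "f \<in> smooth_closure U (smooth_on U) \<Longrightarrow> f \<in> smooth_on U"
  using smooth_on_coinduct_upto[OF open_U, of "{}"] by auto

lemma smooth_on_differentiable: "f \<in> smooth_on U \<Longrightarrow> w \<in> U \<Longrightarrow> f differentiable (at w)"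
  by (erule smooth_on.cases) blast

lemma smooth_on_const: "(\<lambda>w. c) \<in> smooth_on U"
  by (rule smooth_on_closed, intro smooth_closure_const)

lemma smooth_on_add: "f \<in> smooth_on U \<Longrightarrow> g \<in> smooth_on U \<Longrightarrow> (\<lambda>w. f w + g w) \<in> smooth_on U"
  by (rule smooth_on_closed, intro smooth_closure_add smooth_closure_base)

lemma smooth_on_mult: "f \<in> smooth_on U \<Longrightarrow> g \<in> smooth_on U \<Longrightarrow> (\<lambda>w. f w * g w) \<in> smooth_on U"
  by (rule smooth_on_closed, intro smooth_closure_mult smooth_closure_base)

lemma smooth_on_uminus: "f \<in> smooth_on U \<Longrightarrow> (\<lambda>w. - f w) \<in> smooth_on U"
  by (rule smooth_on_closed, intro smooth_closure_uminus smooth_closure_base)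

lemma smooth_on_diff: "f \<in> smooth_on U \<Longrightarrow> g \<in> smooth_on U \<Longrightarrow> (\<lambda>w. f w - g w) \<in> smooth_on U"
  by (rule smooth_on_closed, intro smooth_closure_diff smooth_closure_base)

lemma smooth_on_cnj: "f \<in> smooth_on U \<Longrightarrow> (\<lambda>w. cnj (f w)) \<in> smooth_on U"
  by (rule smooth_on_closed, intro smooth_closure_cnj smooth_closure_base)

lemma smooth_on_inverse:
  "f \<in> smooth_on U \<Longrightarrow> \<forall>w\<in>U. f w \<noteq> 0 \<Longrightarrow> (\<lambda>w. inverse (f w)) \<in> smooth_on U"
  by (rule smooth_on_closed, intro smooth_closure_inverse smooth_closure_base)

lemma smooth_on_Ln:
  "f \<in> smooth_on U \<Longrightarrow> \<forall>w\<in>U. f w \<notin> \<real>\<^sub>\<le>\<^sub>0 \<Longrightarrow> (\<lambda>w. Ln (f w)) \<in> smooth_on U"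
  by (rule smooth_on_closed, intro smooth_closure_Ln smooth_closure_base)

lemma smooth_on_cong: "f \<in> smooth_on U \<Longrightarrow> \<forall>w\<in>U. g w = f w \<Longrightarrow> g \<in> smooth_on U"
  by (rule smooth_on_closed, intro smooth_closure_cong[OF smooth_closure_base])

lemma smooth_on_sum:
  "finite A \<Longrightarrow> (\<And>a. a \<in> A \<Longrightarrow> h a \<in> smooth_on U) \<Longrightarrow> (\<lambda>w. \<Sum>a\<in>A. h a w) \<in> smooth_on U"
  by (rule smooth_on_closed, intro smooth_closure_sum smooth_closure_base)

lemma smooth_on_prod:
  "finite A \<Longrightarrow> (\<And>a. a \<in> A \<Longrightarrow> h a \<in> smooth_on U) \<Longrightarrow> (\<lambda>w. \<Prod>a\<in>A. h a w) \<in> smooth_on U"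
  by (rule smooth_on_closed, intro smooth_closure_prod smooth_closure_base)

end

lemma smooth_on_wirt:
  assumes "open U" "f \<in> smooth_on U"
  shows "wirt i f \<in> smooth_on U" and "awirt i f \<in> smooth_on U"
proof -
  let ?d = "\<lambda>v w. frechet_derivative f (at w) v"
  have d: "?d v \<in> smooth_on U" for v
    using assms(2) smooth_on_iff derivatives_in_derivative by blast
  have "(f has_derivative frechet_derivative f (at w)) (at w)" if "w \<in> U" for w
    using assms(2) that smooth_on_iff derivatives_in_has_derivative by blast
  note wirt = wirt_eq_derivative[OF this]
  have "(\<lambda>w. 1/2 * (?d (axis i 1) w - \<i> * ?d (axis i \<i>) w)) \<in> smooth_on U"
    using d by (intro smooth_on_mult smooth_on_diff smooth_on_const assms(1))
  then show "wirt i f \<in> smooth_on U"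
    by (rule smooth_on_cong[OF assms(1)]) (simp add: wirt)
  have "(\<lambda>w. 1/2 * (?d (axis i 1) w + \<i> * ?d (axis i \<i>) w)) \<in> smooth_on U"
    using d by (intro smooth_on_mult smooth_on_add smooth_on_const assms(1))
  then show "awirt i f \<in> smooth_on U"
    by (rule smooth_on_cong[OF assms(1)]) (simp add: wirt)
qed

lemma hol_on_smooth_on:
  assumes "open U" "hol_on U f"
  shows "f \<in> smooth_on U"
proof -
  let ?X = "{f. hol_on U f}"
  have "derivatives_in U (smooth_closure U (?X \<union> smooth_on U)) f" if "hol_on U f" for f
  proof (rule derivatives_in_closureI[where f'="\<lambda>w v. \<Sum>i\<in>UNIV. v $ i * wirt i f w"])
    fix w assume "w \<in> U"
    with that have "cholo_at (foldr wirt [] f) w"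
      unfolding hol_on_def by blast
    then obtain L where L: "(f has_derivative L) (at w)" "\<forall>c v. L (c *s v) = c * L v"
      unfolding cholo_at_def by auto
    moreover have "L = (\<lambda>v. \<Sum>i\<in>UNIV. v $ i * wirt i f w)"
      by (rule ext) (rule wirt_complex_linear_derivative[OF L])
    ultimately show "(f has_derivative (\<lambda>v. \<Sum>i\<in>UNIV. v $ i * wirt i f w)) (at w)"
      by simp
  next
    fix v
    have "wirt i f \<in> smooth_closure U (?X \<union> smooth_on U)" for i
      using that hol_on_wirt by (blast intro: smooth_closure_base)
    then show "(\<lambda>w. \<Sum>i\<in>UNIV. v $ i * wirt i f w) \<in> smooth_closure U (?X \<union> smooth_on U)"
      by (intro smooth_closure_sum smooth_closure_mult[OF smooth_closure_const]) simp_all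
  qed
  then have "smooth_closure U (?X \<union> smooth_on U) \<subseteq> smooth_on U"
    by (intro smooth_on_coinduct_upto[OF assms(1)]) simp
  moreover have "f \<in> smooth_closure U (?X \<union> smooth_on U)"
    using assms(2) by (intro smooth_closure_base) simp
  ultimately show ?thesis
    by (rule subsetD)
qed

definition smooth_vec_on :: "'a::real_normed_vector set \<Rightarrow> ('a \<Rightarrow> complex^'n) \<Rightarrow> bool"
  where "smooth_vec_on U F \<longleftrightarrow> (\<forall>a. (\<lambda>w. F w $ a) \<in> smooth_on U)"

lemma smooth_vec_on_vwirt: "open U \<Longrightarrow> smooth_vec_on U F \<Longrightarrow> smooth_vec_on U (vwirt i F)"
  unfolding smooth_vec_on_def vwirt_component by (auto intro: smooth_on_wirt)

context
  fixes U :: "'a::real_normed_vector set"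
  assumes open_U: "open U"
begin

lemma smooth_vec_on_differentiable: "smooth_vec_on U F \<Longrightarrow> w \<in> U \<Longrightarrow> F differentiable (at w)"
  unfolding smooth_vec_on_def by (intro differentiable_vecI smooth_on_differentiable[OF open_U]) auto

lemma smooth_vec_on_add: "smooth_vec_on U F \<Longrightarrow> smooth_vec_on U G \<Longrightarrow> smooth_vec_on U (\<lambda>w. F w + G w)"
  unfolding smooth_vec_on_def using smooth_on_add[OF open_U] by simp

lemma smooth_vec_on_diff: "smooth_vec_on U F \<Longrightarrow> smooth_vec_on U G \<Longrightarrow> smooth_vec_on U (\<lambda>w. F w - G w)"
  unfolding smooth_vec_on_def using smooth_on_diff[OF open_U] by simp

lemma smooth_vec_on_scale:
  "f \<in> smooth_on U \<Longrightarrow> smooth_vec_on U F \<Longrightarrow> smooth_vec_on U (\<lambda>w. f w *s F w)"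
  unfolding smooth_vec_on_def using smooth_on_mult[OF open_U] by simp

lemma smooth_vec_on_sum:
  "finite A \<Longrightarrow> (\<And>a. a \<in> A \<Longrightarrow> smooth_vec_on U (H a)) \<Longrightarrow> smooth_vec_on U (\<lambda>w. \<Sum>a\<in>A. H a w)"
  unfolding smooth_vec_on_def sum_component by (auto intro: smooth_on_sum[OF open_U])

lemma smooth_vec_on_vcnj: "smooth_vec_on U F \<Longrightarrow> smooth_vec_on U (\<lambda>w. vcnj (F w))"
  unfolding smooth_vec_on_def vcnj_def using smooth_on_cnj[OF open_U] by simp

lemma smooth_on_pr:
  assumes "smooth_vec_on U F" "smooth_vec_on U G"
  shows "(\<lambda>w. pr B (F w) (G w)) \<in> smooth_on U"
  unfolding pr_def
proof (intro smooth_on_sum[OF open_U] smooth_on_mult[OF open_U])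
  show "(\<lambda>w. F w $ a) \<in> smooth_on U" "(\<lambda>w. G w $ a) \<in> smooth_on U" for a
    using assms unfolding smooth_vec_on_def by blast+
qed (simp_all add: smooth_on_const[OF open_U])

lemma smooth_on_det:
  fixes C :: "'a \<Rightarrow> complex^'k::finite^'k"
  assumes "\<And>r s. (\<lambda>w. C w $ r $ s) \<in> smooth_on U"
  shows "(\<lambda>w. det (C w)) \<in> smooth_on U"
  unfolding det_def
  using assms by (intro smooth_on_sum[OF open_U] smooth_on_mult[OF open_U] smooth_on_const[OF open_U]
      smooth_on_prod[OF open_U]) simp_all

end

section \<open>The bilinear form\<close>

lemma pr_add_left: "pr B (x + y) z = pr B x z + pr B y z"
  by (simp add: pr_def distrib_right sum.distrib)

lemma pr_add_right: "pr B x (y + z) = pr B x y + pr B x z"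
  by (simp add: pr_def distrib_left sum.distrib)

lemma pr_diff_left: "pr B (x - y) z = pr B x z - pr B y z"
  by (simp add: pr_def left_diff_distrib sum_subtractf)

lemma pr_scale_right: "pr B x (c *s y) = c * pr B x y"
  by (simp add: pr_def sum_distrib_left ac_simps)

lemma pr_sum_left: "finite S \<Longrightarrow> pr B (\<Sum>a\<in>S. x a) y = (\<Sum>a\<in>S. pr B (x a) y)"
  by (induction S rule: finite_induct) (simp_all add: pr_add_left, simp add: pr_def)

lemma pr_sum_right: "finite S \<Longrightarrow> pr B y (\<Sum>a\<in>S. x a) = (\<Sum>a\<in>S. pr B y (x a))"
  by (induction S rule: finite_induct) (simp_all add: pr_add_right, simp add: pr_def)

lemma pr_commute: "\<forall>a b. B $ a $ b = B $ b $ a \<Longrightarrow> pr B x y = pr B y x"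
  unfolding pr_def by (subst sum.swap) (simp add: ac_simps)

lemma wirt_pr:
  assumes F: "F differentiable (at z)" and G: "G differentiable (at z)"
  shows "wirt i (\<lambda>w. pr B (F w) (G w)) z = pr B (vwirt i F z) (G z) + pr B (F z) (vwirt i G z)"
proof -
  let ?c = "\<lambda>a b. complex_of_real (B $ a $ b)"
  have dF: "(\<lambda>w. F w $ a * ?c a b) differentiable (at z)" for a b
    by (intro differentiable_mult differentiable_component[OF F] differentiable_const)
  have dG: "(\<lambda>w. G w $ b) differentiable (at z)" for b
    by (rule differentiable_component[OF G])
  have d: "(\<lambda>w. F w $ a * ?c a b * G w $ b) differentiable (at z)" for a b
    by (intro differentiable_mult dF dG)
  have product_rule: "wirt i (\<lambda>w. F w $ a * ?c a b * G w $ b) z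
      = wirt i (\<lambda>w. F w $ a) z * ?c a b * G z $ b + F z $ a * ?c a b * wirt i (\<lambda>w. G w $ b) z"
    for a b
    using wirt_mult[OF dF[of a b] dG[of b], of i]
      wirt_mult[OF differentiable_component[OF F, of a] differentiable_const[of "?c a b"], of i]
    by simp
  have "wirt i (\<lambda>w. pr B (F w) (G w)) z
      = wirt i (\<lambda>w. \<Sum>a\<in>UNIV. \<Sum>b\<in>UNIV. F w $ a * ?c a b * G w $ b) z"
    by (simp add: pr_def)
  also have "\<dots> = (\<Sum>a\<in>UNIV. \<Sum>b\<in>UNIV. wirt i (\<lambda>w. F w $ a * ?c a b * G w $ b) z)"
    using d by (simp add: wirt_sum)
  also have "\<dots> = pr B (vwirt i F z) (G z) + pr B (F z) (vwirt i G z)"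
    unfolding product_rule by (simp add: pr_def vwirt_component sum.distrib)
  finally show ?thesis .
qed

lemma wirt_pr_vanishing:
  assumes "open U" "z \<in> U" "\<forall>w\<in>U. pr B (F w) (G w) = 0"
    and "F differentiable (at z)" "G differentiable (at z)"
  shows "pr B (vwirt i F z) (G z) = - pr B (F z) (vwirt i G z)"
  using wirt_pr[OF assms(4,5), of i B] wirt_eq_0_if_vanishing_on_open[OF assms(1-3)]
  by (simp add: eq_neg_iff_add_eq_0)

lemma matrix_inv_component:
  fixes A :: "'a::field^'k::finite^'k"
  assumes "det A \<noteq> 0"
  shows "matrix_inv A $ k $ q = det (\<chi> i j. if j = k then axis q 1 $ i else A $ i $ j) / det A"
proof -
  have "\<exists>A'. A ** A' = mat 1 \<and> A' ** A = mat 1"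
    using assms by (simp add: invertible_det_nz[symmetric] invertible_def)
  then have "A ** matrix_inv A = mat 1"
    unfolding matrix_inv_def by (rule someI2_ex) blast
  moreover have "(A *v (\<chi> k. matrix_inv A $ k $ q)) $ r = (A ** matrix_inv A) $ r $ q" for r
    by (simp add: matrix_vector_mult_def matrix_matrix_mult_def)
  ultimately have "A *v (\<chi> k. matrix_inv A $ k $ q) = axis q 1"
    by (simp add: vec_eq_iff mat_def axis_def)
  then show ?thesis
    using cramer[OF assms] by (simp add: vec_eq_iff)
qed

section \<open>The Hodge filtration\<close>

lemma filt_top: "filt hp 4 z = hp 4 z"
  unfolding filt_def by auto

context
  fixes hp :: "nat \<Rightarrow> 'z \<Rightarrow> (complex^'n) set" and z :: 'z
  assumes subspaces: "\<forall>q\<le>4. csubspace (hp q z)"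
begin

lemma filt_zero: "0 \<in> filt hp p z"
  unfolding filt_def using subspaces by (auto simp: csubspace_def intro!: exI[of _ "\<lambda>q. 0"])

lemma filt_add:
  assumes "x \<in> filt hp p z" "y \<in> filt hp p z"
  shows "x + y \<in> filt hp p z"
proof -
  obtain a where a: "x = (\<Sum>q\<in>{p..4}. a q)" "\<forall>q\<in>{p..4}. a q \<in> hp q z"
    using assms(1) by (auto simp: filt_def)
  obtain b where b: "y = (\<Sum>q\<in>{p..4}. b q)" "\<forall>q\<in>{p..4}. b q \<in> hp q z"
    using assms(2) by (auto simp: filt_def)
  have "\<forall>q\<in>{p..4}. a q + b q \<in> hp q z"
    using a b subspaces by (auto simp: csubspace_def)
  moreover have "x + y = (\<Sum>q\<in>{p..4}. a q + b q)"
    using a b by (simp add: sum.distrib)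
  ultimately show ?thesis
    unfolding filt_def by blast
qed

lemma filt_scale:
  assumes "x \<in> filt hp p z"
  shows "c *s x \<in> filt hp p z"
proof -
  obtain a where a: "x = (\<Sum>q\<in>{p..4}. a q)" "\<forall>q\<in>{p..4}. a q \<in> hp q z"
    using assms by (auto simp: filt_def)
  have "\<forall>q\<in>{p..4}. c *s a q \<in> hp q z"
    using a subspaces by (auto simp: csubspace_def)
  moreover have "c *s x = (\<Sum>q\<in>{p..4}. c *s a q)"
    using a by (simp add: vec_eq_iff sum_distrib_left)
  ultimately show ?thesis
    unfolding filt_def by blast
qed

lemma filt_diff: "x \<in> filt hp p z \<Longrightarrow> y \<in> filt hp p z \<Longrightarrow> x - y \<in> filt hp p z"
  using filt_add[OF _ filt_scale[of y p "-1"]] by (simp add: vec_eq_iff)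

lemma filt_sum: "finite S \<Longrightarrow> (\<And>a. a \<in> S \<Longrightarrow> x a \<in> filt hp p z) \<Longrightarrow> (\<Sum>a\<in>S. x a) \<in> filt hp p z"
  by (induction S rule: finite_induct) (auto intro: filt_zero filt_add)

lemma filt_antimono:
  assumes "p \<le> p'" "x \<in> filt hp p' z"
  shows "x \<in> filt hp p z"
proof -
  obtain a where a: "x = (\<Sum>q\<in>{p'..4}. a q)" "\<forall>q\<in>{p'..4}. a q \<in> hp q z"
    using assms(2) by (auto simp: filt_def)
  define b where "b q = (if p' \<le> q then a q else 0)" for q
  have "\<forall>q\<in>{p..4}. b q \<in> hp q z"
    using a subspaces by (auto simp: b_def csubspace_def)
  moreover have "{p..4} \<inter> {q. p' \<le> q} = {p'..(4::nat)}"
    using assms(1) by auto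
  then have "x = (\<Sum>q\<in>{p..4} \<inter> {q. p' \<le> q}. a q)"
    using a(1) by simp
  then have "x = (\<Sum>q\<in>{p..4}. b q)"
    by (simp add: sum.inter_restrict b_def)
  ultimately show ?thesis
    unfolding filt_def by blast
qed

end

lemma hodge_structure_pr_commute: "hodge_structure B hp U \<Longrightarrow> pr B x y = pr B y x"
  unfolding hodge_structure_def by (rule pr_commute) (rule conjunct1)

context
  fixes B :: "real^'n::finite^'n" and hp and U :: "(complex^'m::finite) set" and z
  assumes hs: "hodge_structure B hp U" and z: "z \<in> U"
begin

lemmas hodge_structure_at = hs[unfolded hodge_structure_def, THEN conjunct2, THEN conjunct2, THEN bspec, OF z]

lemma hodge_structure_subspaces: "\<forall>q\<le>4. csubspace (hp q z)"
  by (rule hodge_structure_at[THEN conjunct1])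

lemma hodge_structure_decomposition:
  "\<exists>!y. (\<forall>q. (q \<le> 4 \<longrightarrow> y q \<in> hp q z) \<and> (4 < q \<longrightarrow> y q = 0)) \<and> v = (\<Sum>q\<le>4. y q)"
  by (rule hodge_structure_at[THEN conjunct2, THEN conjunct1, rule_format])

lemma hodge_structure_orthogonal:
  "p \<le> 4 \<Longrightarrow> p' \<le> 4 \<Longrightarrow> p + p' \<noteq> 4 \<Longrightarrow> x \<in> hp p z \<Longrightarrow> y \<in> hp p' z \<Longrightarrow> pr B x y = 0"
  by (rule hodge_structure_at[THEN conjunct2, THEN conjunct2, THEN conjunct2, THEN conjunct1, rule_format])

lemma hodge_structure_top_positive:
  assumes "x \<in> hp 4 z" "x \<noteq> 0"
  shows "pr B x (vcnj x) \<notin> \<real>\<^sub>\<le>\<^sub>0"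
proof -
  have "\<i> ^ 4 = (1::complex)"
    by (simp add: eval_nat_numeral)
  moreover have "let c = \<i> ^ 4 * (- \<i>) ^ (4 - 4) * pr B x (vcnj x) in Im c = 0 \<and> Re c > 0"
    using hodge_structure_at[THEN conjunct2, THEN conjunct2, THEN conjunct2, THEN conjunct2, rule_format,
        of 4 x] assms by simp
  ultimately show ?thesis
    by (simp add: complex_nonpos_Reals_iff Let_def)
qed

lemma filt_orthogonal:
  assumes "x \<in> filt hp p z" "y \<in> filt hp q z" "5 \<le> p + q"
  shows "pr B x y = 0"
proof -
  obtain a where a: "x = (\<Sum>r\<in>{p..4}. a r)" "\<forall>r\<in>{p..4}. a r \<in> hp r z"
    using assms(1) by (auto simp: filt_def)
  obtain b where b: "y = (\<Sum>r\<in>{q..4}. b r)" "\<forall>r\<in>{q..4}. b r \<in> hp r z"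
    using assms(2) by (auto simp: filt_def)
  have "pr B (a r) (b s) = 0" if "r \<in> {p..4}" "s \<in> {q..4}" for r s
    using hodge_structure_orthogonal[of r s] a b that assms(3) by auto
  then show ?thesis
    unfolding a(1) b(1) by (simp add: pr_sum_left pr_sum_right)
qed

lemma hcomp_eqI:
  assumes "p \<le> 4" "\<forall>q\<le>4. y q \<in> hp q z" "v = (\<Sum>q\<le>4. y q)"
  shows "hcomp hp p z v = y p"
  unfolding hcomp_def
proof (rule the_equality)
  show "\<exists>y'. (\<forall>q\<le>4. y' q \<in> hp q z) \<and> v = (\<Sum>q\<le>4. y' q) \<and> y' p = y p"
    using assms(2,3) by (intro exI[of _ y]) simp
  let ?decomposes = "\<lambda>Y. (\<forall>q. (q \<le> 4 \<longrightarrow> Y q \<in> hp q z) \<and> (4 < q \<longrightarrow> Y q = 0)) \<and> v = (\<Sum>q\<le>4. Y q)"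
  let ?trunc = "\<lambda>y q. if q \<le> 4 then y q else 0"
  have unique: "\<exists>!Y. ?decomposes Y"
    by (rule hodge_structure_decomposition)
  have decomposes: "?decomposes (?trunc y')" if "\<forall>q\<le>4. y' q \<in> hp q z" "v = (\<Sum>q\<le>4. y' q)" for y'
    using that by simp
  fix x assume "\<exists>y'. (\<forall>q\<le>4. y' q \<in> hp q z) \<and> v = (\<Sum>q\<le>4. y' q) \<and> y' p = x"
  then obtain y' where y': "\<forall>q\<le>4. y' q \<in> hp q z" "v = (\<Sum>q\<le>4. y' q)" "y' p = x"
    by blast
  have "Uniq ?decomposes"
    using unique unfolding ex1_iff_ex_Uniq by (rule conjunct2)
  then have "?trunc y' = ?trunc y"
    by (rule Uniq_D[where P="?decomposes", OF _ decomposes[OF y'(1,2)] decomposes[OF assms(2,3)]])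
  then have "?trunc y' p = ?trunc y p"
    by (rule fun_cong)
  then show "x = y p"
    using y'(3) assms(1) by simp
qed

text \<open>For \<open>v \<in> F\<^sup>1\<close> the \<open>H\<^sup>0\<^sup>,\<^sup>4\<close>-component vanishes, and all components of degree \<open>\<ge> 2\<close>
  pair trivially with \<open>F\<^sup>3\<close>.\<close>

lemma pr_hcomp_1:
  assumes v: "v \<in> filt hp 1 z" and x: "x \<in> filt hp 3 z"
  shows "pr B (hcomp hp 1 z v) x = pr B v x"
proof -
  obtain y where y: "v = (\<Sum>q\<in>{1..4}. y q)" "\<forall>q\<in>{1..4}. y q \<in> hp q z"
    using v by (auto simp: filt_def)
  define Y where "Y q = (if 1 \<le> q then y q else 0)" for q
  have "\<forall>q\<le>4. Y q \<in> hp q z"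
    using y hodge_structure_subspaces by (auto simp: Y_def csubspace_def)
  moreover have "v = (\<Sum>q\<le>4. Y q)"
    unfolding y(1) Y_def by (simp add: atMost_atLeast0 sum.atLeast_Suc_atMost)
  ultimately have "hcomp hp 1 z v = y 1"
    using hcomp_eqI[of 1] by (simp add: Y_def)
  moreover have "{1..4} = insert 1 {2..4::nat}"
    by auto
  then have "v = y 1 + (\<Sum>q\<in>{2..4}. y q)"
    unfolding y(1) by simp
  moreover have "(\<Sum>q\<in>{2..4}. y q) \<in> filt hp 2 z"
    unfolding filt_def using y by auto
  ultimately show ?thesis
    using filt_orthogonal[OF _ x, of _ 2] by (simp add: pr_add_left)
qed

end

section \<open>Covariant derivatives of the period map\<close>

context
  fixes B :: "real^'n::finite^'n" and hp :: "nat \<Rightarrow> complex^'m::finite \<Rightarrow> (complex^'n) set"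
    and U :: "(complex^'m) set" and \<Omega> :: "complex^'m \<Rightarrow> complex^'n"
  assumes open_U: "open U" and hs: "hodge_structure B hp U" and tr: "transversal hp U"
    and hol: "\<forall>a. hol_on U (\<lambda>w. \<Omega> w $ a)"
    and \<Omega>_spans: "\<forall>w\<in>U. \<Omega> w \<noteq> 0 \<and> hp 4 w = {c *s \<Omega> w | c. True}"
    and det_g: "\<forall>w\<in>U. det (gmat B \<Omega> w) \<noteq> 0"
begin

lemma smooth_\<Omega>: "smooth_vec_on U \<Omega>"
  unfolding smooth_vec_on_def using hol hol_on_smooth_on[OF open_U] by blast

lemma \<Omega>_in_top: "w \<in> U \<Longrightarrow> \<Omega> w \<in> hp 4 w"
  using \<Omega>_spans by (auto intro!: exI[of _ 1])

lemma smooth_lw: "lw B \<Omega> \<in> smooth_on U"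
proof (rule smooth_on_cong[OF open_U])
  show "(\<lambda>w. Ln (pr B (\<Omega> w) (vcnj (\<Omega> w)))) \<in> smooth_on U"
    using hodge_structure_top_positive[OF hs _ \<Omega>_in_top] \<Omega>_spans
    by (intro smooth_on_Ln[OF open_U] smooth_on_pr[OF open_U] smooth_\<Omega> smooth_vec_on_vcnj[OF open_U]) auto
qed (simp add: lw_def)

lemma smooth_Kf: "Kf B \<Omega> i \<in> smooth_on U"
  unfolding Kf_def[abs_def] by (rule smooth_on_uminus[OF open_U smooth_on_wirt(1)[OF open_U smooth_lw]])

lemma smooth_gm: "gm B \<Omega> i j \<in> smooth_on U"
  unfolding gm_def[abs_def]
  by (rule smooth_on_uminus[OF open_U smooth_on_wirt(1)[OF open_U smooth_on_wirt(2)[OF open_U smooth_lw]]])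

lemma smooth_ginv: "(\<lambda>w. ginv B \<Omega> w $ k $ q) \<in> smooth_on U"
proof (rule smooth_on_cong[OF open_U])
  let ?C = "\<lambda>w. (\<chi> r s. if s = k then axis q 1 $ r else transpose (gmat B \<Omega> w) $ r $ s) :: complex^'m^'m"
  show "\<forall>w\<in>U. ginv B \<Omega> w $ k $ q = det (?C w) * inverse (det (gmat B \<Omega> w))"
    using det_g by (simp add: ginv_def matrix_inv_component divide_inverse)
  have "(\<lambda>w. ?C w $ r $ s) \<in> smooth_on U" for r s
    by (cases "s = k") (simp_all add: transpose_def gmat_def smooth_on_const[OF open_U] smooth_gm)
  moreover have "(\<lambda>w. gmat B \<Omega> w $ r $ s) \<in> smooth_on U" for r s
    by (simp add: gmat_def smooth_gm)
  ultimately show "(\<lambda>w. det (?C w) * inverse (det (gmat B \<Omega> w))) \<in> smooth_on U"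
    using det_g by (intro smooth_on_mult[OF open_U] smooth_on_inverse[OF open_U] smooth_on_det[OF open_U])
qed

lemma smooth_Gam: "Gam B \<Omega> k i j \<in> smooth_on U"
  unfolding Gam_def[abs_def]
  by (intro smooth_on_sum[OF open_U] smooth_on_mult[OF open_U] smooth_ginv
      smooth_on_wirt(1)[OF open_U smooth_gm]) simp

lemma smooth_D1: "smooth_vec_on U (D1 B \<Omega> i)"
  unfolding D1_def[abs_def]
  by (intro smooth_vec_on_add[OF open_U] smooth_vec_on_scale[OF open_U] smooth_vec_on_vwirt[OF open_U]
      smooth_\<Omega> smooth_Kf)

lemma smooth_D2: "smooth_vec_on U (D2 B \<Omega> j i)"
  unfolding D2_def[abs_def]
  by (intro smooth_vec_on_add[OF open_U] smooth_vec_on_diff[OF open_U] smooth_vec_on_scale[OF open_U]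
      smooth_vec_on_sum[OF open_U] smooth_vec_on_vwirt[OF open_U] smooth_D1 smooth_Kf smooth_Gam) simp

lemma vwirt_in_filt:
  assumes "p \<in> {1..4}" "smooth_vec_on U s" "\<forall>w\<in>U. s w \<in> filt hp p w" "z \<in> U"
  shows "vwirt i s z \<in> filt hp (p - 1) z"
  using tr assms smooth_vec_on_differentiable[OF open_U assms(2,4)] unfolding transversal_def by blast

lemma \<Omega>_in_F4: "\<forall>w\<in>U. \<Omega> w \<in> filt hp 4 w"
  by (simp add: filt_top \<Omega>_in_top)

lemma d\<Omega>_in_F3: "\<forall>w\<in>U. vwirt l \<Omega> w \<in> filt hp 3 w"
  using vwirt_in_filt[of 4, OF _ smooth_\<Omega> \<Omega>_in_F4] by simp

lemma dd\<Omega>_in_F2: "\<forall>w\<in>U. vwirt k (vwirt l \<Omega>) w \<in> filt hp 2 w"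
  using vwirt_in_filt[of 3, OF _ smooth_vec_on_vwirt[OF open_U smooth_\<Omega>] d\<Omega>_in_F3] by simp

lemma ddd\<Omega>_in_F1: "\<forall>w\<in>U. vwirt j (vwirt k (vwirt l \<Omega>)) w \<in> filt hp 1 w"
  using vwirt_in_filt[of 2, OF _ smooth_vec_on_vwirt[OF open_U smooth_vec_on_vwirt[OF open_U smooth_\<Omega>]]
      dd\<Omega>_in_F2] by simp

lemma smooth_K\<Omega>: "smooth_vec_on U (\<lambda>w. Kf B \<Omega> l w *s \<Omega> w)"
  by (rule smooth_vec_on_scale[OF open_U smooth_Kf smooth_\<Omega>])

lemma K\<Omega>_in_F4: "\<forall>w\<in>U. Kf B \<Omega> l w *s \<Omega> w \<in> filt hp 4 w"
  using \<Omega>_in_F4 filt_scale[where hp=hp, OF hodge_structure_subspaces[OF hs]] by blast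

lemma D1_in_F3: "\<forall>w\<in>U. D1 B \<Omega> i w \<in> filt hp 3 w"
proof
  fix w assume w: "w \<in> U"
  note sub = hodge_structure_subspaces[OF hs w]
  have "Kf B \<Omega> i w *s \<Omega> w \<in> filt hp 3 w"
    using K\<Omega>_in_F4 w by (intro filt_antimono[where hp=hp and z=w, OF sub, of 3 4]) auto
  then show "D1 B \<Omega> i w \<in> filt hp 3 w"
    unfolding D1_def using d\<Omega>_in_F3 w by (intro filt_add[where hp=hp and z=w, OF sub]) auto
qed

lemma D2_minus_dd\<Omega>_in_F3: "\<forall>w\<in>U. D2 B \<Omega> k l w - vwirt k (vwirt l \<Omega>) w \<in> filt hp 3 w"
proof
  fix w assume w: "w \<in> U"
  note sub = hodge_structure_subspaces[OF hs w]
  have "vwirt k (D1 B \<Omega> l) w = vwirt k (vwirt l \<Omega>) w + vwirt k (\<lambda>w. Kf B \<Omega> l w *s \<Omega> w) w"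
    unfolding D1_def[abs_def]
    by (intro vwirt_add smooth_vec_on_differentiable[OF open_U _ w] smooth_vec_on_vwirt[OF open_U]
        smooth_\<Omega> smooth_K\<Omega>)
  then have "D2 B \<Omega> k l w - vwirt k (vwirt l \<Omega>) w = vwirt k (\<lambda>w. Kf B \<Omega> l w *s \<Omega> w) w
      - (\<Sum>q\<in>UNIV. Gam B \<Omega> q l k w *s D1 B \<Omega> q w) + Kf B \<Omega> k w *s D1 B \<Omega> l w"
    by (simp add: D2_def)
  also have "\<dots> \<in> filt hp 3 w"
    using vwirt_in_filt[of 4, OF _ smooth_K\<Omega> K\<Omega>_in_F4 w] D1_in_F3 w
    by (intro filt_add[where hp=hp and z=w, OF sub] filt_diff[where hp=hp and z=w, OF sub] filt_sum[where hp=hp and z=w, OF sub] filt_scale[where hp=hp and z=w, OF sub]) auto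
  finally show "D2 B \<Omega> k l w - vwirt k (vwirt l \<Omega>) w \<in> filt hp 3 w" .
qed

lemma D2_in_F2: "\<forall>w\<in>U. D2 B \<Omega> k l w \<in> filt hp 2 w"
proof
  fix w assume w: "w \<in> U"
  note sub = hodge_structure_subspaces[OF hs w]
  have "D2 B \<Omega> k l w - vwirt k (vwirt l \<Omega>) w \<in> filt hp 2 w"
    using D2_minus_dd\<Omega>_in_F3 w by (intro filt_antimono[where hp=hp and z=w, OF sub, of 2 3]) auto
  then have "vwirt k (vwirt l \<Omega>) w + (D2 B \<Omega> k l w - vwirt k (vwirt l \<Omega>) w) \<in> filt hp 2 w"
    using dd\<Omega>_in_F2 w by (intro filt_add[where hp=hp and z=w, OF sub]) auto
  then show "D2 B \<Omega> k l w \<in> filt hp 2 w"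
    by simp
qed

lemma T3_minus_ddd\<Omega>_in_F2:
  assumes z: "z \<in> U"
  shows "T3 B \<Omega> j k l z - vwirt j (vwirt k (vwirt l \<Omega>)) z \<in> filt hp 2 z"
proof -
  note sub = hodge_structure_subspaces[OF hs z]
  let ?E = "\<lambda>w. D2 B \<Omega> k l w - vwirt k (vwirt l \<Omega>) w"
  have smooth_E: "smooth_vec_on U ?E"
    by (intro smooth_vec_on_diff[OF open_U] smooth_D2 smooth_vec_on_vwirt[OF open_U] smooth_\<Omega>)
  have "D2 B \<Omega> k l = (\<lambda>w. vwirt k (vwirt l \<Omega>) w + ?E w)"
    by simp
  then have "vwirt j (D2 B \<Omega> k l) z = vwirt j (vwirt k (vwirt l \<Omega>)) z + vwirt j ?E z"
    by (metis (no_types) vwirt_add smooth_vec_on_differentiable[OF open_U _ z] smooth_E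
        smooth_vec_on_vwirt[OF open_U] smooth_\<Omega>)
  then have "T3 B \<Omega> j k l z - vwirt j (vwirt k (vwirt l \<Omega>)) z = vwirt j ?E z + Kf B \<Omega> j z *s D2 B \<Omega> k l z
      - (\<Sum>p\<in>UNIV. Gam B \<Omega> p k j z *s D2 B \<Omega> p l z) - (\<Sum>p\<in>UNIV. Gam B \<Omega> p l j z *s D2 B \<Omega> k p z)"
    by (simp add: T3_def)
  also have "\<dots> \<in> filt hp 2 z"
    using vwirt_in_filt[of 3, OF _ smooth_E D2_minus_dd\<Omega>_in_F3 z] D2_in_F2 z
    by (intro filt_add[where hp=hp and z=z, OF sub] filt_diff[where hp=hp and z=z, OF sub] filt_sum[where hp=hp and z=z, OF sub] filt_scale[where hp=hp and z=z, OF sub]) auto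
  finally show ?thesis .
qed

lemma xi_eq_neg_pr_d\<Omega>_ddd\<Omega>:
  assumes z: "z \<in> U"
  shows "xi B \<Omega> i j k l z = - pr B (vwirt i \<Omega> z) (vwirt j (vwirt k (vwirt l \<Omega>)) z)"
proof -
  have "\<forall>w\<in>U. pr B (\<Omega> w) (vwirt j (vwirt k (vwirt l \<Omega>)) w) = 0"
    using \<Omega>_in_F4 ddd\<Omega>_in_F1 filt_orthogonal[OF hs] by fastforce
  from wirt_pr_vanishing[OF open_U z this] show ?thesis
    unfolding xi_def
    by (simp add: smooth_vec_on_differentiable[OF open_U _ z] smooth_vec_on_vwirt[OF open_U] smooth_\<Omega>)
qed

text \<open>Only the \<open>H\<^sup>1\<^sup>,\<^sup>3\<close>-part of \<open>T\<close> and the \<open>\<partial>\<^sub>i\<Omega>\<close>-part of \<open>D\<^sub>i\<Omega>\<close> survive the pairing.\<close>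

lemma pr_D3_D1:
  assumes z: "z \<in> U"
  shows "pr B (D3 B hp \<Omega> j k l z) (D1 B \<Omega> i z) = pr B (vwirt j (vwirt k (vwirt l \<Omega>)) z) (vwirt i \<Omega> z)"
proof -
  note sub = hodge_structure_subspaces[OF hs z]
  let ?ddd = "vwirt j (vwirt k (vwirt l \<Omega>)) z"
  have D1: "D1 B \<Omega> i z \<in> filt hp 3 z"
    using D1_in_F3 z by blast
  have rest: "T3 B \<Omega> j k l z - ?ddd \<in> filt hp 2 z"
    by (rule T3_minus_ddd\<Omega>_in_F2[OF z])
  have "?ddd + (T3 B \<Omega> j k l z - ?ddd) \<in> filt hp 1 z"
    using ddd\<Omega>_in_F1 z filt_antimono[where hp=hp and z=z, OF sub _ rest, of 1]
    by (intro filt_add[where hp=hp and z=z, OF sub]) auto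
  then have "T3 B \<Omega> j k l z \<in> filt hp 1 z"
    by simp
  then have "pr B (D3 B hp \<Omega> j k l z) (D1 B \<Omega> i z) = pr B (T3 B \<Omega> j k l z) (D1 B \<Omega> i z)"
    unfolding D3_def by (rule pr_hcomp_1[OF hs z _ D1])
  also have "\<dots> = pr B ?ddd (D1 B \<Omega> i z)"
    using filt_orthogonal[OF hs z rest D1] by (simp add: pr_diff_left)
  also have "\<dots> = pr B ?ddd (vwirt i \<Omega> z)"
    using filt_orthogonal[OF hs z _ \<Omega>_in_F4[rule_format, OF z], of ?ddd 1] ddd\<Omega>_in_F1 z
    by (simp add: D1_def pr_add_right pr_scale_right)
  finally show ?thesis .
qed

lemma pr_D2_D2:
  assumes z: "z \<in> U"
  shows "pr B (D2 B \<Omega> k l z) (D2 B \<Omega> j i z) = pr B (vwirt k (vwirt l \<Omega>) z) (vwirt j (vwirt i \<Omega>) z)"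
proof -
  let ?A = "vwirt k (vwirt l \<Omega>) z" and ?C = "vwirt j (vwirt i \<Omega>) z"
  let ?EA = "D2 B \<Omega> k l z - ?A" and ?EC = "D2 B \<Omega> j i z - ?C"
  have A: "?A \<in> filt hp 2 z" and C: "?C \<in> filt hp 2 z"
    using dd\<Omega>_in_F2 z by blast+
  have EA: "?EA \<in> filt hp 3 z" and EC: "?EC \<in> filt hp 3 z"
    using D2_minus_dd\<Omega>_in_F3 z by blast+
  have "pr B (?A + ?EA) (?C + ?EC) = pr B ?A ?C"
    using filt_orthogonal[OF hs z A EC] filt_orthogonal[OF hs z EA C] filt_orthogonal[OF hs z EA EC]
    by (simp only: pr_add_left pr_add_right) simp
  then show ?thesis
    by simp
qed

lemma pr_dd\<Omega>_dd\<Omega>: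
  assumes z: "z \<in> U"
  shows "pr B (vwirt j (vwirt i \<Omega>) z) (vwirt k (vwirt l \<Omega>) z)
    = - pr B (vwirt i \<Omega> z) (vwirt j (vwirt k (vwirt l \<Omega>)) z)"
proof -
  have "\<forall>w\<in>U. pr B (vwirt i \<Omega> w) (vwirt k (vwirt l \<Omega>) w) = 0"
    using d\<Omega>_in_F3 dd\<Omega>_in_F2 filt_orthogonal[OF hs] by fastforce
  then show ?thesis
    by (rule wirt_pr_vanishing[OF open_U z])
      (simp_all add: smooth_vec_on_differentiable[OF open_U _ z] smooth_vec_on_vwirt[OF open_U] smooth_\<Omega>)
qed

end

theorem lemma4p5:
  fixes B :: "real^'n::finite^'n"
    and hp :: "nat \<Rightarrow> complex^'m::finite \<Rightarrow> (complex^'n) set"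
    and U :: "(complex^'m) set"
    and \<Omega> :: "complex^'m \<Rightarrow> complex^'n"
  assumes "open U"
    and "hodge_structure B hp U"
    and "transversal hp U"
    and "\<forall>a. hol_on U (\<lambda>w. \<Omega> w $ a)"
    and "\<forall>w\<in>U. \<Omega> w \<noteq> 0 \<and> hp 4 w = {c *s \<Omega> w | c. True}"
    and "\<forall>w\<in>U. det (gmat B \<Omega> w) \<noteq> 0"
    and "z \<in> U"
  shows "xi B \<Omega> i j k l z = - pr B (D3 B hp \<Omega> j k l z) (D1 B \<Omega> i z)
       \<and> xi B \<Omega> i j k l z = pr B (D2 B \<Omega> k l z) (D2 B \<Omega> j i z)"
proof -
  note commute = hodge_structure_pr_commute[OF assms(2)]
  note xi = xi_eq_neg_pr_d\<Omega>_ddd\<Omega>[OF assms, of i j k l]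
  show ?thesis
  proof
    show "xi B \<Omega> i j k l z = - pr B (D3 B hp \<Omega> j k l z) (D1 B \<Omega> i z)"
      using xi pr_D3_D1[OF assms] commute by simp
    show "xi B \<Omega> i j k l z = pr B (D2 B \<Omega> k l z) (D2 B \<Omega> j i z)"
      using xi pr_D2_D2[OF assms] pr_dd\<Omega>_dd\<Omega>[OF assms, of j i k l] commute by simp
  qed
qed

end
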